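(* Let $f\in L^1(\mathbb{R})$ be bounded and let $\nu$ be a finite (positive) measure on $\mathbb{R}$ such that $f$ is continuous at $\nu$-almost every point. Suppose that $\int_{-\infty}^{\infty}\hat f(t)\hat\nu(-t)\,dt$ converges at least conditionally. Then \[ \int_{-\infty}^\infty f(x)\,d\nu(x)=\frac{1}{2\pi}\int_{-\infty}^\infty\hat f(t)\hat\nu(-t)\,dt. \]
   Context: Fourier transforms: $\hat f(t)=\int_{\mathbb{R}}f(y)e^{ity}\,dy$ and $\hat\nu(t)=\int_{\mathbb{R}}e^{ity}\,d\nu(y)$. An integral $\int_{-\infty}^\infty g(t)\,dt$ converges conditionally if $g$ is locally integrable and $\lim_{A\to\infty}\int_{-A}^{A}g(t)\,dt$ exists and is finite; the integral is then defined as this limit. *)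

theory Defs
  imports "HOL-Analysis.Analysis"
begin

definition fourier_fun :: "(real \<Rightarrow> complex) \<Rightarrow> real \<Rightarrow> complex" where
  "fourier_fun f t = (LINT y|lborel. f y * cis (t * y))"

definition fourier_meas :: "real measure \<Rightarrow> real \<Rightarrow> complex" where
  "fourier_meas M t = (LINT y|M. cis (t * y))"

definition cond_conv_integral :: "(real \<Rightarrow> complex) \<Rightarrow> complex \<Rightarrow> bool" where
  "cond_conv_integral g I \<longleftrightarrow>
     (\<forall>a b. set_integrable lborel {a..b} g) \<and>
     ((\<lambda>A. LINT t:{-A..A}|lborel. g t) \<longlongrightarrow> I) at_top"

end

theory Submission
  imports Defs "HOL-Probability.Probability" "HOL-Real_Asymp.Real_Asymp"
begin

(* Damp the integrand by the Gaussian factor exp (-(sigma t)^2/2) and let sigma -> 0+.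
   On the one hand, since exp (-(sigma t)^2/2) is the integral of a exp (-a^2/2) over
   [sigma |t|, oo), Fubini turns the damped integral into the average of the symmetric partial
   integrals over [-a/sigma, a/sigma] against the probability density a exp (-a^2/2) on (0, oo);
   these partial integrals are bounded and tend to I, so the damped integral tends to I.
   On the other hand, Fubini and the self-duality of the Gaussian under the Fourier transform
   turn the damped integral into sqrt (2 pi) times the nu-integral of the Gaussian smoothing
   of f at scale sigma.  That smoothing is bounded and converges to sqrt (2 pi) f(x) wherever
   f is continuous, hence nu-almost everywhere, and dominated convergence gives 2 pi times the
   nu-integral of f. *)

lemma integrable_gaussian: "integrable lborel (\<lambda>t::real. exp (- (t^2) / 2))"
  and integral_gaussian: "(\<integral>t. exp (- (t^2) / 2) \<partial>lborel) = sqrt (2*pi)"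
proof -
  have eq: "exp (- (t^2) / 2) = sqrt (2*pi) * std_normal_density t" for t
    by (simp add: std_normal_density_def)
  show "integrable lborel (\<lambda>t::real. exp (- (t^2) / 2))"
    unfolding eq by simp
  show "(\<integral>t. exp (- (t^2) / 2) \<partial>lborel) = sqrt (2*pi)"
    unfolding eq by simp
qed

lemma integrable_gaussian_scaled:
  "\<sigma> \<noteq> 0 \<Longrightarrow> integrable lborel (\<lambda>t::real. exp (- ((\<sigma>*t)^2) / 2))"
  using lborel_integrable_real_affine[OF integrable_gaussian, of \<sigma> 0] by simp

lemma fourier_gaussian:
  "(\<integral>t. complex_of_real (exp (- (t^2) / 2)) * cis (t*u) \<partial>lborel) =
     complex_of_real (sqrt (2*pi) * exp (- (u^2) / 2))"
proof -
  have "char std_normal_distribution u = complex_of_real (exp (- (u^2) / 2))"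
    by (simp add: char_std_normal_distribution)
  then have char: "(\<integral>x. std_normal_density x *\<^sub>R iexp (u*x) \<partial>lborel) = complex_of_real (exp (- (u^2) / 2))"
    unfolding char_def by (subst (asm) integral_density) auto
  have "(\<integral>t. complex_of_real (exp (- (t^2) / 2)) * cis (t*u) \<partial>lborel) =
      (\<integral>t. complex_of_real (sqrt (2*pi)) * (std_normal_density t *\<^sub>R iexp (u*t)) \<partial>lborel)"
    by (rule Bochner_Integration.integral_cong[OF refl])
       (simp add: std_normal_density_def cis_conv_exp scaleR_conv_of_real mult.commute)
  also have "\<dots> = complex_of_real (sqrt (2*pi)) * complex_of_real (exp (- (u^2) / 2))"
    by (simp only: integral_mult_right_zero char)
  finally show ?thesis by simp
qed

lemma fourier_gaussian_scaled:
  assumes \<sigma>: "\<sigma> > 0"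
  shows "(\<integral>t. exp (- ((\<sigma>*t)^2) / 2) *\<^sub>R cis (t*u) \<partial>lborel) =
           complex_of_real (sqrt (2*pi) / \<sigma> * exp (- ((u/\<sigma>)^2) / 2))"
proof -
  have "(\<integral>t. exp (- ((\<sigma>*t)^2) / 2) *\<^sub>R cis (t*u) \<partial>lborel) =
      (1/\<sigma>) *\<^sub>R (\<integral>q. exp (- ((\<sigma>*(0 + 1/\<sigma>*q))^2) / 2) *\<^sub>R cis ((0 + 1/\<sigma>*q) * u) \<partial>lborel)"
    using \<sigma> by (subst lborel_integral_real_affine[where c="1/\<sigma>" and t=0]) auto
  also have "(\<integral>q. exp (- ((\<sigma>*(0 + 1/\<sigma>*q))^2) / 2) *\<^sub>R cis ((0 + 1/\<sigma>*q) * u) \<partial>lborel) =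
      (\<integral>q. complex_of_real (exp (- (q^2) / 2)) * cis (q * (u/\<sigma>)) \<partial>lborel)"
    using \<sigma> by (intro Bochner_Integration.integral_cong) (auto simp: scaleR_conv_of_real)
  also have "\<dots> = complex_of_real (sqrt (2*pi) * exp (- ((u/\<sigma>)^2) / 2))"
    by (rule fourier_gaussian)
  finally show ?thesis by (simp add: scaleR_conv_of_real)
qed

lemma integrable_gaussian_tail_moment:
    "0 \<le> (r::real) \<Longrightarrow> integrable lborel (\<lambda>a. if r \<le> a then a * exp (- (a^2) / 2) else 0)"
  and integral_gaussian_tail_moment:
    "0 \<le> (r::real) \<Longrightarrow> (\<integral>a. (if r \<le> a then a * exp (- (a^2) / 2) else 0) \<partial>lborel) = exp (- (r^2) / 2)"
proof -
  assume r: "0 \<le> r"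
  have lim: "((\<lambda>x::real. - exp (- (x^2) / 2)) \<longlongrightarrow> 0) at_top" by real_asymp
  have FTC: "set_integrable lborel (einterval (ereal r) \<infinity>) (\<lambda>a. a * exp (- (a^2) / 2)) \<and>
     (LBINT a=ereal r..\<infinity>. a * exp (- (a^2) / 2)) = 0 - (- exp (- (r^2) / 2))"
    by (intro conjI interval_integral_FTC_nonneg[where F="\<lambda>x. - exp (- (x^2) / 2)"])
       (use r lim in \<open>auto intro!: derivative_eq_intros tendsto_eq_intros simp: ereal_tendsto_simps\<close>)
  have ae: "AE a in lborel. indicator {r<..} a *\<^sub>R (a * exp (- (a^2) / 2)) =
              (if r \<le> a then a * exp (- (a^2) / 2) else 0)"
    using AE_lborel_singleton[of r] by eventually_elim (auto simp: indicator_def)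
  show "integrable lborel (\<lambda>a. if r \<le> a then a * exp (- (a^2) / 2) else 0)"
    using FTC ae unfolding set_integrable_def by (rule_tac integrable_cong_AE[THEN iffD1]) auto
  have "(LBINT a=ereal r..\<infinity>. a * exp (- (a^2) / 2)) =
      (\<integral>a. (if r \<le> a then a * exp (- (a^2) / 2) else 0) \<partial>lborel)"
    unfolding interval_integral_to_infinity_eq set_lebesgue_integral_def
    by (rule integral_cong_AE) (use ae in auto)
  then show "(\<integral>a. (if r \<le> a then a * exp (- (a^2) / 2) else 0) \<partial>lborel) = exp (- (r^2) / 2)"
    using FTC by simp
qed

definition sym_partial_integral :: "(real \<Rightarrow> 'a::{banach,second_countable_topology}) \<Rightarrow> real \<Rightarrow> 'a"
  where "sym_partial_integral g A = (LINT t:{-A..A}|lborel. g t)"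

lemma sym_partial_integral_neg: "A < 0 \<Longrightarrow> sym_partial_integral g A = 0"
  by (simp add: sym_partial_integral_def set_lebesgue_integral_def)

lemma borel_measurable_sym_partial_integral [measurable]:
  assumes [measurable]: "g \<in> borel_measurable borel"
  shows "sym_partial_integral g \<in> borel_measurable borel"
proof -
  have "sym_partial_integral g = (\<lambda>A. \<integral>t. (if -A \<le> t \<and> t \<le> A then g t else 0) \<partial>lborel)"
    unfolding sym_partial_integral_def set_lebesgue_integral_def
    by (intro ext Bochner_Integration.integral_cong) (auto simp: indicator_def)
  also have "\<dots> \<in> borel_measurable borel"
    by (rule lborel.borel_measurable_lebesgue_integral) measurable
  finally show ?thesis .
qed

lemma norm_sym_partial_integral_le:
  fixes g :: "real \<Rightarrow> 'a::{banach,second_countable_topology}"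
  assumes [measurable]: "g \<in> borel_measurable borel"
    and bound: "\<And>t. norm (g t) \<le> B" and A: "0 \<le> A"
  shows "norm (sym_partial_integral g A) \<le> 2 * A * B"
proof -
  have int: "integrable lborel (\<lambda>t. indicator {-A..A} t * B)"
    by (intro integrable_mult_left integrable_real_indicator) (auto simp: emeasure_lborel_Icc_eq)
  have "norm (sym_partial_integral g A) \<le> (\<integral>t. indicator {-A..A} t * B \<partial>lborel)"
    unfolding sym_partial_integral_def set_lebesgue_integral_def
    by (rule Bochner_Integration.integral_norm_bound_integral[OF Bochner_Integration.integrable_bound[OF int] int])
       (auto simp: indicator_def intro: bound order_trans[OF bound abs_ge_self])
  also have "\<dots> = 2 * A * B" using A by simp
  finally show ?thesis .
qed

lemma bounded_sym_partial_integral: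
  fixes g :: "real \<Rightarrow> 'a::{banach,second_countable_topology}"
  assumes [measurable]: "g \<in> borel_measurable borel"
    and bound: "\<And>t. norm (g t) \<le> B" and lim: "(sym_partial_integral g \<longlongrightarrow> I) at_top"
  obtains C where "\<And>A. norm (sym_partial_integral g A) \<le> C"
proof -
  have B: "0 \<le> B" using bound[of 0] norm_ge_zero order_trans by blast
  from lim have "eventually (\<lambda>A. dist (sym_partial_integral g A) I < 1) at_top"
    by (rule tendstoD) simp
  then obtain A0 where A0: "\<And>A. A \<ge> A0 \<Longrightarrow> dist (sym_partial_integral g A) I < 1"
    unfolding eventually_at_top_linorder by blast
  have "norm (sym_partial_integral g A) \<le> max (norm I + 1) (2 * \<bar>A0\<bar> * B)" for A
  proof (cases "A \<ge> A0")
    case True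
    then show ?thesis
      using A0[OF True] norm_triangle_sub[of "sym_partial_integral g A" I] by (simp add: dist_norm)
  next
    case False
    show ?thesis
    proof (cases "A < 0")
      case True
      then have "sym_partial_integral g A = 0" by (rule sym_partial_integral_neg)
      with B show ?thesis by (simp add: max_def)
    next
      case nonneg: False
      have "norm (sym_partial_integral g A) \<le> 2 * A * B"
        using nonneg by (intro norm_sym_partial_integral_le bound) auto
      also have "\<dots> \<le> 2 * \<bar>A0\<bar> * B" using False nonneg B by (intro mult_right_mono) auto
      finally show ?thesis by simp
    qed
  qed
  then show ?thesis by (rule that)
qed

definition gauss_damped_integral ::
    "real \<Rightarrow> (real \<Rightarrow> 'a::{banach,second_countable_topology}) \<Rightarrow> 'a"
  where "gauss_damped_integral \<sigma> g = (\<integral>t. exp (- ((\<sigma>*t)^2) / 2) *\<^sub>R g t \<partial>lborel)"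

(* Fubini, after writing exp (-(sigma t)^2/2) as the integral of a exp (-a^2/2) over [sigma |t|, oo). *)
lemma gauss_damped_integral_eq_average:
  fixes g :: "real \<Rightarrow> 'a::{banach,second_countable_topology}"
  assumes \<sigma>: "\<sigma> > 0" and [measurable]: "g \<in> borel_measurable borel"
    and bound: "\<And>t. norm (g t) \<le> B"
  shows "gauss_damped_integral \<sigma> g =
           (\<integral>a. (a * exp (- (a^2) / 2)) *\<^sub>R sym_partial_integral g (a/\<sigma>) \<partial>lborel)"
proof -
  define k where "k t a = (if \<sigma> * \<bar>t\<bar> \<le> a then a * exp (- (a^2) / 2) else 0)" for t a :: real
  define H where "H t a = k t a *\<^sub>R g t" for t a
  have k_int: "integrable lborel (k t)" for t
    unfolding k_def using \<sigma> by (intro integrable_gaussian_tail_moment) simp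
  have k_integral: "(\<integral>a. k t a \<partial>lborel) = exp (- ((\<sigma>*t)^2) / 2)" for t
    unfolding k_def using \<sigma>
    by (subst integral_gaussian_tail_moment) (auto simp: power_mult_distrib)
  have k_nonneg: "0 \<le> k t a" for t a
  proof (cases "\<sigma> * \<bar>t\<bar> \<le> a")
    case True
    moreover have "0 \<le> \<sigma> * \<bar>t\<bar>" using \<sigma> by simp
    ultimately show ?thesis by (simp add: k_def)
  qed (simp add: k_def)
  have H_int: "integrable (lborel \<Otimes>\<^sub>M lborel) (\<lambda>(t, a). H t a)"
  proof (rule lborel_pair.Fubini_integrable)
    show "(\<lambda>(t, a). H t a) \<in> borel_measurable (lborel \<Otimes>\<^sub>M lborel)"
      unfolding H_def k_def by measurable
    have B: "0 \<le> B" using bound[of 0] norm_ge_zero order_trans by blast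
    have "integrable lborel (\<lambda>t. B * exp (- ((\<sigma>*t)^2) / 2))"
      using integrable_gaussian_scaled[of \<sigma>] \<sigma> by simp
    then have "integrable lborel (\<lambda>t. exp (- ((\<sigma>*t)^2) / 2) * norm (g t))"
      by (rule Bochner_Integration.integrable_bound)
         (use B bound in \<open>auto simp: abs_mult mult_right_mono\<close>)
    moreover have "(\<integral>a. norm (H t a) \<partial>lborel) = exp (- ((\<sigma>*t)^2) / 2) * norm (g t)" for t
    proof -
      have "(\<integral>a. norm (H t a) \<partial>lborel) = (\<integral>a. k t a \<partial>lborel) * norm (g t)"
        using k_nonneg by (simp add: H_def)
      then show ?thesis by (simp only: k_integral)
    qed
    ultimately show "integrable lborel (\<lambda>t. \<integral>a. norm (case (t, a) of (t, a) \<Rightarrow> H t a) \<partial>lborel)"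
      by simp
    show "AE t in lborel. integrable lborel (\<lambda>a. case (t, a) of (t, a) \<Rightarrow> H t a)"
      using k_int by (simp add: H_def)
  qed
  have slice: "(\<integral>t. H t a \<partial>lborel) = (a * exp (- (a^2) / 2)) *\<^sub>R sym_partial_integral g (a/\<sigma>)" for a
  proof -
    have "H t a = (a * exp (- (a^2) / 2)) *\<^sub>R (indicator {-(a/\<sigma>)..a/\<sigma>} t *\<^sub>R g t)" for t
    proof -
      have "\<sigma> * \<bar>t\<bar> \<le> a \<longleftrightarrow> \<bar>t\<bar> \<le> a/\<sigma>"
        using \<sigma> by (simp add: pos_le_divide_eq mult.commute)
      also have "\<dots> \<longleftrightarrow> t \<in> {-(a/\<sigma>)..a/\<sigma>}" by auto
      finally show ?thesis by (auto simp: H_def k_def indicator_def)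
    qed
    then show ?thesis
      unfolding sym_partial_integral_def set_lebesgue_integral_def
      by (simp only: integral_scaleR_right)
  qed
  have "gauss_damped_integral \<sigma> g = (\<integral>t. \<integral>a. H t a \<partial>lborel \<partial>lborel)"
    unfolding gauss_damped_integral_def H_def
    by (subst integral_scaleR_left) (simp_all add: k_int k_integral)
  also have "\<dots> = (\<integral>a. \<integral>t. H t a \<partial>lborel \<partial>lborel)"
    using lborel_pair.Fubini_integral[OF H_int] by simp
  finally show ?thesis by (simp only: slice)
qed

lemma gauss_damped_integral_tendsto:
  fixes g :: "real \<Rightarrow> 'a::{banach,second_countable_topology}"
  assumes [measurable]: "g \<in> borel_measurable borel"
    and bound: "\<And>t. norm (g t) \<le> B"
    and lim: "(sym_partial_integral g \<longlongrightarrow> I) at_top"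
    and \<sigma>_pos: "\<And>n. \<sigma> n > 0" and \<sigma>_lim: "\<sigma> \<longlonglongrightarrow> 0"
  shows "(\<lambda>n. gauss_damped_integral (\<sigma> n) g) \<longlonglongrightarrow> I"
proof -
  obtain C where C: "\<And>A. norm (sym_partial_integral g A) \<le> C"
    using bounded_sym_partial_integral[OF _ bound lim] by auto
  define K where "K a = (if 0 \<le> a then a * exp (- (a^2) / 2) else 0)" for a :: real
  have K_int: "integrable lborel K"
    using integrable_gaussian_tail_moment[of 0] by (simp add: K_def[abs_def])
  have K_integral: "(\<integral>a. K a \<partial>lborel) = 1"
    using integral_gaussian_tail_moment[of 0] by (simp add: K_def[abs_def])
  have K_meas [measurable]: "K \<in> borel_measurable borel"
    unfolding K_def[abs_def] by measurable
  have summand: "(a * exp (- (a^2) / 2)) *\<^sub>R sym_partial_integral g (a / \<sigma> n) =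
      K a *\<^sub>R sym_partial_integral g (a / \<sigma> n)" for a n
    using sym_partial_integral_neg[of "a / \<sigma> n" g] \<sigma>_pos[of n]
    by (cases a "0::real" rule: linorder_cases) (auto simp: K_def divide_neg_pos)
  have "(\<lambda>n. \<integral>a. K a *\<^sub>R sym_partial_integral g (a / \<sigma> n) \<partial>lborel) \<longlonglongrightarrow> (\<integral>a. K a *\<^sub>R I \<partial>lborel)"
  proof (rule integral_dominated_convergence[where w="\<lambda>a. K a * C"])
    show "integrable lborel (\<lambda>a. K a * C)" using K_int by simp
    show "AE a in lborel. (\<lambda>n. K a *\<^sub>R sym_partial_integral g (a / \<sigma> n)) \<longlonglongrightarrow> K a *\<^sub>R I"
    proof (rule AE_I2)
      fix a :: real
      show "(\<lambda>n. K a *\<^sub>R sym_partial_integral g (a / \<sigma> n)) \<longlonglongrightarrow> K a *\<^sub>R I"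
      proof (cases "a > 0")
        case True
        have "filterlim (\<lambda>n. a / \<sigma> n) at_top sequentially"
          using True \<sigma>_pos by (intro LIM_at_top_divide \<sigma>_lim tendsto_const) auto
        then show ?thesis
          by (intro tendsto_scaleR tendsto_const filterlim_compose[OF lim])
      qed (simp add: K_def)
    qed
    show "AE a in lborel. norm (K a *\<^sub>R sym_partial_integral g (a / \<sigma> n)) \<le> K a * C" for n
      using C by (intro AE_I2) (simp add: K_def abs_mult mult_left_mono)
    show "(\<lambda>a. K a *\<^sub>R I) \<in> borel_measurable lborel" by measurable
    show "(\<lambda>a. K a *\<^sub>R sym_partial_integral g (a / \<sigma> n)) \<in> borel_measurable lborel" for n
      by measurable
  qed
  also have "(\<integral>a. K a *\<^sub>R I \<partial>lborel) = I"
    using K_int K_integral by simp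
  finally show ?thesis
    by (simp only: gauss_damped_integral_eq_average[OF \<sigma>_pos assms(1) bound] summand)
qed

(* For sigma > 0 this is sqrt (2 pi) times the convolution of f with the centred normal density
   of variance sigma^2. *)
definition gauss_smoothing ::
    "real \<Rightarrow> (real \<Rightarrow> 'a::{banach,second_countable_topology}) \<Rightarrow> real \<Rightarrow> 'a"
  where "gauss_smoothing \<sigma> f x = (\<integral>z. exp (- (z^2) / 2) *\<^sub>R f (x + \<sigma>*z) \<partial>lborel)"

lemma borel_measurable_gauss_smoothing [measurable]:
  assumes [measurable]: "f \<in> borel_measurable borel"
  shows "gauss_smoothing \<sigma> f \<in> borel_measurable borel"
  unfolding gauss_smoothing_def[abs_def]
  by (rule lborel.borel_measurable_lebesgue_integral) measurable

lemma norm_gauss_smoothing_le: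
  fixes f :: "real \<Rightarrow> 'a::{banach,second_countable_topology}"
  assumes [measurable]: "f \<in> borel_measurable borel" and bound: "\<And>y. norm (f y) \<le> C"
  shows "norm (gauss_smoothing \<sigma> f x) \<le> C * sqrt (2*pi)"
proof -
  have C: "0 \<le> C" using bound[of 0] norm_ge_zero order_trans by blast
  have dom: "norm (exp (- (z^2) / 2) *\<^sub>R f (x + \<sigma>*z)) \<le> C * exp (- (z^2) / 2)" for z
    using bound[of "x + \<sigma>*z"] by (simp add: mult.commute mult_left_mono)
  have int: "integrable lborel (\<lambda>z. C * exp (- (z^2) / 2))"
    using integrable_gaussian by simp
  have "norm (gauss_smoothing \<sigma> f x) \<le> (\<integral>z. C * exp (- (z^2) / 2) \<partial>lborel)"
    unfolding gauss_smoothing_def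
    by (rule Bochner_Integration.integral_norm_bound_integral
          [OF Bochner_Integration.integrable_bound[OF int] int dom])
       (use C bound in \<open>auto simp: mult.commute mult_left_mono\<close>)
  also have "\<dots> = C * sqrt (2*pi)" using integral_gaussian by simp
  finally show ?thesis .
qed

lemma gauss_smoothing_tendsto:
  fixes f :: "real \<Rightarrow> 'a::{banach,second_countable_topology}"
  assumes [measurable]: "f \<in> borel_measurable borel" and bound: "\<And>y. norm (f y) \<le> C"
    and cont: "isCont f x" and \<sigma>_lim: "\<sigma> \<longlonglongrightarrow> 0"
  shows "(\<lambda>n. gauss_smoothing (\<sigma> n) f x) \<longlonglongrightarrow> sqrt (2*pi) *\<^sub>R f x"
proof -
  have "(\<lambda>n. gauss_smoothing (\<sigma> n) f x) \<longlonglongrightarrow> (\<integral>z. exp (- (z^2) / 2) *\<^sub>R f x \<partial>lborel)"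
    unfolding gauss_smoothing_def
  proof (rule integral_dominated_convergence[where w="\<lambda>z. C * exp (- (z^2) / 2)"])
    show "integrable lborel (\<lambda>z. C * exp (- (z^2) / 2))"
      using integrable_gaussian by simp
    show "AE z in lborel. (\<lambda>n. exp (- (z^2) / 2) *\<^sub>R f (x + \<sigma> n * z)) \<longlonglongrightarrow> exp (- (z^2) / 2) *\<^sub>R f x"
    proof (rule AE_I2)
      fix z
      have "(\<lambda>n. x + \<sigma> n * z) \<longlonglongrightarrow> x + 0 * z"
        by (intro tendsto_intros \<sigma>_lim)
      then have "(\<lambda>n. f (x + \<sigma> n * z)) \<longlonglongrightarrow> f x"
        using isCont_tendsto_compose[OF cont] by simp
      then show "(\<lambda>n. exp (- (z^2) / 2) *\<^sub>R f (x + \<sigma> n * z)) \<longlonglongrightarrow> exp (- (z^2) / 2) *\<^sub>R f x"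
        by (intro tendsto_scaleR tendsto_const)
    qed
    show "AE z in lborel. norm (exp (- (z^2) / 2) *\<^sub>R f (x + \<sigma> n * z)) \<le> C * exp (- (z^2) / 2)" for n
      using bound by (intro AE_I2) (simp add: mult.commute mult_left_mono)
  qed measurable
  also have "(\<integral>z. exp (- (z^2) / 2) *\<^sub>R f x \<partial>lborel) = sqrt (2*pi) *\<^sub>R f x"
    by (subst integral_scaleR_left) (simp_all only: integrable_gaussian integral_gaussian)
  finally show ?thesis .
qed

lemma integral_gauss_smoothing_tendsto:
  fixes f :: "real \<Rightarrow> 'a::{banach,second_countable_topology}"
  assumes M: "finite_measure M" "sets M = sets borel"
    and [measurable]: "f \<in> borel_measurable borel" and bound: "\<And>y. norm (f y) \<le> C"
    and cont: "AE x in M. isCont f x" and \<sigma>_lim: "\<sigma> \<longlonglongrightarrow> 0"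
  shows "(\<lambda>n. \<integral>x. gauss_smoothing (\<sigma> n) f x \<partial>M) \<longlonglongrightarrow> (\<integral>x. sqrt (2*pi) *\<^sub>R f x \<partial>M)"
proof -
  interpret finite_measure M by (rule M(1))
  note M(2)[measurable_cong]
  show ?thesis
  proof (rule integral_dominated_convergence[where w="\<lambda>_. C * sqrt (2*pi)"])
    show "AE x in M. (\<lambda>n. gauss_smoothing (\<sigma> n) f x) \<longlonglongrightarrow> sqrt (2*pi) *\<^sub>R f x"
      using cont by eventually_elim (rule gauss_smoothing_tendsto[OF _ bound _ \<sigma>_lim], simp_all)
    show "AE x in M. norm (gauss_smoothing (\<sigma> n) f x) \<le> C * sqrt (2*pi)" for n
      by (intro AE_I2 norm_gauss_smoothing_le bound) simp
  qed simp_all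
qed

lemma borel_measurable_cis [measurable]: "cis \<in> borel_measurable borel"
  by (intro borel_measurable_continuous_onI continuous_intros)

lemma integrable_mult_cis:
  assumes "integrable M f" and [measurable]: "h \<in> borel_measurable M"
  shows "integrable M (\<lambda>y. f y * cis (h y))"
proof -
  have [measurable]: "f \<in> borel_measurable M"
    using borel_measurable_integrable[OF assms(1)] .
  show ?thesis
    by (rule Bochner_Integration.integrable_bound[OF integrable_norm[OF assms(1)]]) (auto simp: norm_mult)
qed

lemma borel_measurable_fourier_fun [measurable]:
  assumes "integrable lborel f"
  shows "fourier_fun f \<in> borel_measurable borel"
proof -
  have [measurable]: "f \<in> borel_measurable borel"
    using borel_measurable_integrable[OF assms] by simp
  show ?thesis
    unfolding fourier_fun_def[abs_def]
    by (rule lborel.borel_measurable_lebesgue_integral) measurable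
qed

lemma norm_fourier_fun_le: "norm (fourier_fun f t) \<le> (\<integral>y. norm (f y) \<partial>lborel)"
proof -
  have "norm (fourier_fun f t) \<le> (\<integral>y. norm (f y * cis (t*y)) \<partial>lborel)"
    unfolding fourier_fun_def by (rule integral_norm_bound)
  then show ?thesis by (simp add: norm_mult)
qed

lemma borel_measurable_fourier_meas [measurable]:
  assumes "finite_measure M" "sets M = sets borel"
  shows "fourier_meas M \<in> borel_measurable borel"
proof -
  interpret finite_measure M by (rule assms(1))
  note assms(2)[measurable_cong]
  show ?thesis
    unfolding fourier_meas_def[abs_def]
    by (rule borel_measurable_lebesgue_integral) measurable
qed

lemma norm_fourier_meas_le: "norm (fourier_meas M t) \<le> measure M (space M)"
proof -
  have "norm (fourier_meas M t) \<le> (\<integral>y. norm (cis (t*y)) \<partial>M)"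
    unfolding fourier_meas_def by (rule integral_norm_bound)
  then show ?thesis by simp
qed

lemma gauss_damped_inverse_fourier:
  assumes f: "integrable lborel f" and \<sigma>: "\<sigma> > 0"
  shows "(\<integral>t. exp (- ((\<sigma>*t)^2) / 2) *\<^sub>R (fourier_fun f t * cis (- t * x)) \<partial>lborel) =
           sqrt (2*pi) *\<^sub>R gauss_smoothing \<sigma> f x"
proof -
  have [measurable]: "f \<in> borel_measurable borel"
    using borel_measurable_integrable[OF f] by simp
  define w where "w t = exp (- ((\<sigma>*t)^2) / 2)" for t
  define \<Phi> where "\<Phi> t y = w t *\<^sub>R (f y * cis (t * (y - x)))" for t y
  have \<Phi>_int: "integrable (lborel \<Otimes>\<^sub>M lborel) (\<lambda>(t, y). \<Phi> t y)"
  proof (rule lborel_pair.Fubini_integrable)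
    show "(\<lambda>(t, y). \<Phi> t y) \<in> borel_measurable (lborel \<Otimes>\<^sub>M lborel)"
      unfolding \<Phi>_def w_def by measurable
    have "integrable lborel (\<lambda>t. w t * (\<integral>y. norm (f y) \<partial>lborel))"
      using integrable_gaussian_scaled[of \<sigma>] \<sigma> by (simp add: w_def)
    then show "integrable lborel (\<lambda>t. \<integral>y. norm (case (t, y) of (t, y) \<Rightarrow> \<Phi> t y) \<partial>lborel)"
      by (simp add: \<Phi>_def w_def norm_mult)
    show "AE t in lborel. integrable lborel (\<lambda>y. case (t, y) of (t, y) \<Rightarrow> \<Phi> t y)"
    proof (rule AE_I2)
      fix t
      have "integrable lborel (\<lambda>y. f y * cis (t * (y - x)))"
        by (rule integrable_mult_cis[OF f]) measurable
      then show "integrable lborel (\<lambda>y. case (t, y) of (t, y) \<Rightarrow> \<Phi> t y)"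
        by (simp add: \<Phi>_def)
    qed
  qed
  have inner_y: "(\<integral>y. \<Phi> t y \<partial>lborel) = w t *\<^sub>R (fourier_fun f t * cis (- t * x))" for t
  proof -
    have "cis (t * (y - x)) = cis (t*y) * cis (- t*x)" for y
      by (simp add: cis_mult algebra_simps)
    then have "\<Phi> t y = w t *\<^sub>R ((f y * cis (t*y)) * cis (- t*x))" for y
      by (simp add: \<Phi>_def mult.assoc)
    then show ?thesis
      by (simp only: integral_scaleR_right integral_mult_left_zero fourier_fun_def)
  qed
  have inner_t: "(\<integral>t. \<Phi> t y \<partial>lborel) =
      f y * complex_of_real (sqrt (2*pi) / \<sigma> * exp (- (((y - x)/\<sigma>)^2) / 2))" for y
  proof -
    have "(\<integral>t. \<Phi> t y \<partial>lborel) = f y * (\<integral>t. w t *\<^sub>R cis (t * (y - x)) \<partial>lborel)"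
      unfolding \<Phi>_def by (simp only: mult_scaleR_right[symmetric] integral_mult_right_zero)
    then show ?thesis unfolding w_def by (simp only: fourier_gaussian_scaled[OF \<sigma>])
  qed
  have "(\<integral>y. f y * complex_of_real (sqrt (2*pi) / \<sigma> * exp (- (((y - x)/\<sigma>)^2) / 2)) \<partial>lborel) =
      \<bar>\<sigma>\<bar> *\<^sub>R (\<integral>z. f (x + \<sigma>*z) * complex_of_real (sqrt (2*pi) / \<sigma> * exp (- (((x + \<sigma>*z - x)/\<sigma>)^2) / 2)) \<partial>lborel)"
    using \<sigma> by (intro lborel_integral_real_affine) simp
  also have "(\<integral>z. f (x + \<sigma>*z) * complex_of_real (sqrt (2*pi) / \<sigma> * exp (- (((x + \<sigma>*z - x)/\<sigma>)^2) / 2)) \<partial>lborel) =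
      (\<integral>z. (sqrt (2*pi) / \<sigma>) *\<^sub>R (exp (- (z^2) / 2) *\<^sub>R f (x + \<sigma>*z)) \<partial>lborel)"
  proof (rule Bochner_Integration.integral_cong[OF refl])
    fix z
    have "(x + \<sigma>*z - x)/\<sigma> = z" using \<sigma> by simp
    then show "f (x + \<sigma>*z) * complex_of_real (sqrt (2*pi) / \<sigma> * exp (- (((x + \<sigma>*z - x)/\<sigma>)^2) / 2)) =
        (sqrt (2*pi) / \<sigma>) *\<^sub>R (exp (- (z^2) / 2) *\<^sub>R f (x + \<sigma>*z))"
      by (simp add: scaleR_conv_of_real mult.commute mult.left_commute)
  qed
  also have "\<dots> = (sqrt (2*pi) / \<sigma>) *\<^sub>R gauss_smoothing \<sigma> f x"
    unfolding gauss_smoothing_def by (rule integral_scaleR_right)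
  finally have "(\<integral>y. f y * complex_of_real (sqrt (2*pi) / \<sigma> * exp (- (((y - x)/\<sigma>)^2) / 2)) \<partial>lborel) =
      sqrt (2*pi) *\<^sub>R gauss_smoothing \<sigma> f x"
    using \<sigma> by simp
  then have outer: "(\<integral>y. \<integral>t. \<Phi> t y \<partial>lborel \<partial>lborel) = sqrt (2*pi) *\<^sub>R gauss_smoothing \<sigma> f x"
    by (simp only: inner_t)
  have "(\<integral>t. w t *\<^sub>R (fourier_fun f t * cis (- t * x)) \<partial>lborel) = (\<integral>t. \<integral>y. \<Phi> t y \<partial>lborel \<partial>lborel)"
    by (simp only: inner_y)
  also have "\<dots> = (\<integral>y. \<integral>t. \<Phi> t y \<partial>lborel \<partial>lborel)"
    using lborel_pair.Fubini_integral[OF \<Phi>_int] by simp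
  finally show ?thesis unfolding w_def outer .
qed

lemma gauss_damped_integral_fourier_product:
  assumes f: "integrable lborel f" and M: "finite_measure M" "sets M = sets borel"
    and \<sigma>: "\<sigma> > 0"
  shows "gauss_damped_integral \<sigma> (\<lambda>t. fourier_fun f t * fourier_meas M (- t)) =
           sqrt (2*pi) *\<^sub>R (\<integral>x. gauss_smoothing \<sigma> f x \<partial>M)"
proof -
  interpret finite_measure M by (rule M(1))
  interpret LM: pair_sigma_finite lborel M ..
  note M(2)[measurable_cong]
  have [measurable]: "f \<in> borel_measurable borel"
    using borel_measurable_integrable[OF f] by simp
  have [measurable]: "fourier_fun f \<in> borel_measurable borel"
    using f by (rule borel_measurable_fourier_fun)
  define w where "w t = exp (- ((\<sigma>*t)^2) / 2)" for t
  define \<Psi> where "\<Psi> t x = w t *\<^sub>R (fourier_fun f t * cis (- t * x))" for t x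
  have \<Psi>_int: "integrable (lborel \<Otimes>\<^sub>M M) (\<lambda>(t, x). \<Psi> t x)"
  proof (rule LM.Fubini_integrable)
    show "(\<lambda>(t, x). \<Psi> t x) \<in> borel_measurable (lborel \<Otimes>\<^sub>M M)"
      unfolding \<Psi>_def w_def by measurable
    have norm_\<Psi>: "norm (\<Psi> t x) = w t * norm (fourier_fun f t)" for t x
      by (simp add: \<Psi>_def w_def norm_mult)
    have "integrable lborel (\<lambda>t. measure M (space M) * (\<integral>y. norm (f y) \<partial>lborel) * w t)"
      using integrable_gaussian_scaled[of \<sigma>] \<sigma> by (simp add: w_def)
    then have "integrable lborel (\<lambda>t. measure M (space M) * (w t * norm (fourier_fun f t)))"
      by (rule Bochner_Integration.integrable_bound)
         (auto simp: w_def abs_mult mult.assoc intro!: mult_left_mono norm_fourier_fun_le)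
    moreover have "(\<integral>x. norm (case (t, x) of (t, x) \<Rightarrow> \<Psi> t x) \<partial>M) =
        measure M (space M) * (w t * norm (fourier_fun f t))" for t
      by (simp add: norm_\<Psi>)
    ultimately show "integrable lborel (\<lambda>t. \<integral>x. norm (case (t, x) of (t, x) \<Rightarrow> \<Psi> t x) \<partial>M)"
      by (simp only:)
    show "AE t in lborel. integrable M (\<lambda>x. case (t, x) of (t, x) \<Rightarrow> \<Psi> t x)"
    proof (rule AE_I2)
      fix t
      show "integrable M (\<lambda>x. case (t, x) of (t, x) \<Rightarrow> \<Psi> t x)"
      proof (rule integrable_const_bound[where B="w t * norm (fourier_fun f t)"])
        show "AE x in M. norm (case (t, x) of (t, x) \<Rightarrow> \<Psi> t x) \<le> w t * norm (fourier_fun f t)"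
          by (simp add: norm_\<Psi>)
        show "(\<lambda>x. case (t, x) of (t, x) \<Rightarrow> \<Psi> t x) \<in> borel_measurable M"
          unfolding \<Psi>_def w_def prod.case by measurable
      qed
    qed
  qed
  have inner_x: "(\<integral>x. \<Psi> t x \<partial>M) = w t *\<^sub>R (fourier_fun f t * fourier_meas M (- t))" for t
    unfolding \<Psi>_def fourier_meas_def
    by (simp only: integral_scaleR_right integral_mult_right_zero)
  have "gauss_damped_integral \<sigma> (\<lambda>t. fourier_fun f t * fourier_meas M (- t)) =
      (\<integral>t. \<integral>x. \<Psi> t x \<partial>M \<partial>lborel)"
    unfolding gauss_damped_integral_def inner_x w_def ..
  also have "\<dots> = (\<integral>x. \<integral>t. \<Psi> t x \<partial>lborel \<partial>M)"
    using LM.Fubini_integral[OF \<Psi>_int] by simp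
  also have "\<dots> = (\<integral>x. sqrt (2*pi) *\<^sub>R gauss_smoothing \<sigma> f x \<partial>M)"
    unfolding \<Psi>_def w_def gauss_damped_inverse_fourier[OF f \<sigma>] ..
  finally show ?thesis by simp
qed

theorem lemmaA1:
  fixes f :: "real \<Rightarrow> complex" and M :: "real measure" and I :: complex
  assumes f_int: "integrable lborel f"
    and f_bdd: "bounded (range f)"
    and M_fin: "finite_measure M"
    and M_sets: "sets M = sets borel"
    and f_cont: "AE x in M. isCont f x"
    and conv: "cond_conv_integral (\<lambda>t. fourier_fun f t * fourier_meas M (- t)) I"
  shows "(LINT x|M. f x) = I / (2 * pi)"
proof -
  define g where "g = (\<lambda>t. fourier_fun f t * fourier_meas M (- t))"
  define \<sigma> where "\<sigma> n = 1 / real (Suc n)" for n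
  have \<sigma>_pos: "\<sigma> n > 0" for n by (simp add: \<sigma>_def)
  have \<sigma>_lim: "\<sigma> \<longlonglongrightarrow> 0"
    unfolding \<sigma>_def by (rule LIMSEQ_Suc[OF lim_const_over_n])
  have f_meas: "f \<in> borel_measurable borel"
    using borel_measurable_integrable[OF f_int] by simp
  obtain C where C: "\<And>x. norm (f x) \<le> C"
    using f_bdd unfolding bounded_iff by auto
  have [measurable]: "fourier_fun f \<in> borel_measurable borel"
    using f_int by (rule borel_measurable_fourier_fun)
  have [measurable]: "fourier_meas M \<in> borel_measurable borel"
    using M_fin M_sets by (rule borel_measurable_fourier_meas)
  have g_meas: "g \<in> borel_measurable borel"
    unfolding g_def by measurable
  have g_bound: "norm (g t) \<le> (\<integral>y. norm (f y) \<partial>lborel) * measure M (space M)" for t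
    unfolding g_def norm_mult by (intro mult_mono norm_fourier_fun_le norm_fourier_meas_le) simp_all
  have S_lim: "(sym_partial_integral g \<longlongrightarrow> I) at_top"
    using conv unfolding cond_conv_integral_def sym_partial_integral_def[abs_def] g_def by simp
  have "(\<lambda>n. gauss_damped_integral (\<sigma> n) g) \<longlonglongrightarrow> I"
    by (rule gauss_damped_integral_tendsto[OF g_meas g_bound S_lim \<sigma>_pos \<sigma>_lim])
  moreover have "(\<lambda>n. gauss_damped_integral (\<sigma> n) g) \<longlonglongrightarrow> sqrt (2*pi) *\<^sub>R (\<integral>x. sqrt (2*pi) *\<^sub>R f x \<partial>M)"
    unfolding g_def gauss_damped_integral_fourier_product[OF f_int M_fin M_sets \<sigma>_pos]
    by (intro tendsto_scaleR tendsto_const integral_gauss_smoothing_tendsto[OF M_fin M_sets f_meas C f_cont \<sigma>_lim])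
  ultimately have "I = sqrt (2*pi) *\<^sub>R (\<integral>x. sqrt (2*pi) *\<^sub>R f x \<partial>M)"
    by (rule LIMSEQ_unique)
  also have "\<dots> = (2*pi) *\<^sub>R (\<integral>x. f x \<partial>M)" by simp
  finally show ?thesis by (simp add: scaleR_conv_of_real field_simps)
qed

end
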